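(* If the second-order Lagrangian $L$ is homogeneous, then its Hilbert forms satisfy $i^i_l\vartheta^m=0$, $i^{ij}_l\vartheta^m=0$ and $i^{ijk}_l\vartheta^m=0$ for all indices $i,j,k,l,m\in\{1,2\}$.
   Context: Let $E$ be a smooth manifold of dimension $n$ with local coordinates $(u^\alpha)$. For $k\ge 1$, $\mathcal F^k_{(2)}E$ denotes the bundle of $k$-th order 2-frames in $E$ (regular $k$-th order 2-velocities, i.e. $k$-jets at $0$ of maps $\mathbb R^2\to E$ of rank 2 at $0$), with induced coordinates $u^\alpha_{i_1\cdots i_s}$ ($0\le s\le k$, indices in $\{1,2\}$, totally symmetric in the subscripts). Pull-backs along the projections $\mathcal F^l_{(2)}E\to\mathcal F^k_{(2)}E$ are omitted. $\#(i_1\cdots i_s)$ denotes the number of distinct rearrangements of $(i_1,\dots,i_s)$; repeated indices in $\{1,2\}$ are summed. The total derivatives are the vector fields along $\mathcal F^{k+1}_{(2)}E\to\mathcal F^k_{(2)}E$ given by $\mathbf T_i=\sum_{s=0}^k \frac{1}{\#(i_1\cdots i_s)}u^\alpha_{i i_1\cdots i_s}\,\partial/\partial u^\alpha_{i_1\cdots i_s}$, and the vertical endomorphisms are the type $(1,1)$ tensor fields on $\mathcal F^{k+1}_{(2)}E$ given by $S^j=\sum_{s=0}^k \frac{s+1}{\#(i_1\cdots i_s)}\,\partial/\partial u^\alpha_{j i_1\cdots i_s}\otimes du^\alpha_{i_1\cdots i_s}$. The $S^i$ commute and $S^{i_1\cdots i_s}$ denotes their composite. On forms, $S^i$ acts as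 the degree-zero derivation $(S^i\omega)(X_1,\dots,X_r)=\sum_a \omega(X_1,\dots,S^iX_a,\dots,X_r)$ (zero on functions). The fundamental vector fields are $\Delta^{i_1\cdots i_s}_i=S^{i_1\cdots i_s}(\mathbf T_i)$, well-defined vector fields on $\mathcal F^{k+1}_{(2)}E$. Contraction with $\mathbf T_i$ and with $\Delta^{i_1\cdots i_s}_i$ is denoted $i_i$ and $i^{i_1\cdots i_s}_i$; the corresponding Lie derivatives are $d_i=d\,i_i+i_i\,d$ and $d^{i_1\cdots i_s}_i=d\,i^{i_1\cdots i_s}_i+i^{i_1\cdots i_s}_i d$. The $d_i$ commute and $d_{j_1\cdots j_s}$ denotes their composite. A second-order Lagrangian is a smooth function $L$ on (an open subset of) $\mathcal F^2_{(2)}E$; it is homogeneous if $d^i_jL=\delta^i_jL$ and $d^{ik}_jL=0$ for all $i,j,k$. Its Hilbert forms are the 1-forms $\vartheta^i=(S^i-\tfrac12 d_jS^{ji})\,dL$ on $\mathcal F^3_{(2)}E$. *)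

theory Defs
  imports "HOL-Analysis.Analysis"
begin

text \<open>A symmetric multi-index (i_1 ... i_s) with entries in {1,2} and s \<le> 3 is
  determined by the pair (a,b) = (number of 1's, number of 2's).\<close>

typedef mi = "{(a::nat, b::nat). a + b \<le> 3}"
  by (rule exI[of _ "(0,0)"]) simp

instance mi :: finite
proof
  have "finite {(a::nat, b::nat). a + b \<le> 3}"
    by (rule finite_subset[of _ "{..3} \<times> {..3}"]) auto
  then show "finite (UNIV :: mi set)"
  proof -
    have "UNIV = Abs_mi ` {(a::nat, b::nat). a + b \<le> 3}"
      using type_definition.Abs_image[OF type_definition_mi] by simp
    then show "finite (UNIV :: mi set)" using \<open>finite _\<close> by (metis finite_imageI)
  qed
qed

definition deg :: "mi \<Rightarrow> nat" where
  "deg I = fst (Rep_mi I) + snd (Rep_mi I)"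

definition up :: "nat \<Rightarrow> nat \<times> nat \<Rightarrow> nat \<times> nat" where
  "up j p = (if j = 1 then (fst p + 1, snd p) else (fst p, snd p + 1))"

definition down :: "nat \<Rightarrow> nat \<times> nat \<Rightarrow> nat \<times> nat" where
  "down j p = (if j = 1 then (fst p - 1, snd p) else (fst p, snd p - 1))"

definition contains :: "nat \<Rightarrow> nat \<times> nat \<Rightarrow> bool" where
  "contains j p = (if j = 1 then 1 \<le> fst p else 1 \<le> snd p)"

text \<open>Points of (a coordinate chart of) F^3_(2) E: the coordinate u^\<alpha>_I is  x $ (\<alpha>, I).
  'n indexes the coordinates of E (dim E = CARD('n)).\<close>
type_synonym 'n pt = "real ^ ('n \<times> mi)"

text \<open>Vector fields and 1-forms are given by their components w.r.t.
  \<partial>/\<partial>u^\<alpha>_I and du^\<alpha>_I; 2-forms by Omega(A,B) with Omega(X,Y) = sum X^A Y^B Omega(A,B).\<close>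
type_synonym 'n vfield = "'n pt \<Rightarrow> 'n \<times> mi \<Rightarrow> real"
type_synonym 'n form1 = "'n pt \<Rightarrow> 'n \<times> mi \<Rightarrow> real"
type_synonym 'n form2 = "'n pt \<Rightarrow> 'n \<times> mi \<Rightarrow> 'n \<times> mi \<Rightarrow> real"

definition pd :: "'n::finite \<times> mi \<Rightarrow> ('n pt \<Rightarrow> real) \<Rightarrow> 'n pt \<Rightarrow> real" where
  "pd c f x = frechet_derivative f (at x) (axis c 1)"

fun Ck :: "nat \<Rightarrow> 'a::euclidean_space set \<Rightarrow> ('a \<Rightarrow> real) \<Rightarrow> bool" where
  "Ck 0 W f = continuous_on W f"
| "Ck (Suc k) W f = ((\<forall>x\<in>W. f differentiable (at x)) \<and>
      (\<forall>b\<in>Basis. Ck k W (\<lambda>x. frechet_derivative f (at x) b)))"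

definition smooth_on :: "'a::euclidean_space set \<Rightarrow> ('a \<Rightarrow> real) \<Rightarrow> bool" where
  "smooth_on W f = (\<forall>k. Ck k W f)"

definition dfun :: "('n::finite pt \<Rightarrow> real) \<Rightarrow> 'n form1" where
  "dfun f x c = pd c f x"

definition contract :: "'n::finite form1 \<Rightarrow> 'n vfield \<Rightarrow> 'n pt \<Rightarrow> real" where
  "contract \<omega> X x = (\<Sum>c\<in>UNIV. \<omega> x c * X x c)"

definition dform :: "'n::finite form1 \<Rightarrow> 'n form2" where
  "dform \<omega> x A B = pd A (\<lambda>y. \<omega> y B) x - pd B (\<lambda>y. \<omega> y A) x"

definition contract2 :: "'n::finite vfield \<Rightarrow> 'n form2 \<Rightarrow> 'n form1" where
  "contract2 X \<Omega> x B = (\<Sum>A\<in>UNIV. X x A * \<Omega> x A B)"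

text \<open>Lie derivative of a function f along X (= i_X df) and of a 1-form (Cartan: d i_X + i_X d).\<close>
definition lie_fun :: "'n::finite vfield \<Rightarrow> ('n pt \<Rightarrow> real) \<Rightarrow> 'n pt \<Rightarrow> real" where
  "lie_fun X f = contract (dfun f) X"

definition lie_form :: "'n::finite vfield \<Rightarrow> 'n form1 \<Rightarrow> 'n form1" where
  "lie_form X \<omega> x B = dfun (contract \<omega> X) x B + contract2 X (dform \<omega>) x B"

text \<open>The vertical endomorphism S^j of F^3, acting on vector fields:
  S^j (\<partial>/\<partial>u_K) = (|K|+1) \<partial>/\<partial>u_{jK} for |K| \<le> 2, and 0 for |K| = 3.\<close>
definition Svf :: "nat \<Rightarrow> 'n::finite vfield \<Rightarrow> 'n vfield" where
  "Svf j X x c = (let p = Rep_mi (snd c) in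
     if contains j p then real (deg (snd c)) * X x (fst c, Abs_mi (down j p)) else 0)"

text \<open>... and on 1-forms, as degree-zero derivation: (S^j \<omega>)(X) = \<omega>(S^j X).\<close>
definition Sform :: "nat \<Rightarrow> 'n::finite form1 \<Rightarrow> 'n form1" where
  "Sform j \<omega> x c = (if deg (snd c) \<le> 2
     then real (deg (snd c) + 1) * \<omega> x (fst c, Abs_mi (up j (Rep_mi (snd c)))) else 0)"

text \<open>The total derivative T_l = sum_K u_{lK} \<partial>/\<partial>u_K, a vector field along
  F^4 \<rightarrow> F^3.  Its components with |K| \<le> 2 are functions on F^3; we keep exactly
  these (truncation).  This truncation does not change S^j T_l, nor contractions
  with (differentials of) forms pulled back from F^2, which is all that is used.\<close>
definition Ttot :: "nat \<Rightarrow> 'n::finite vfield" where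
  "Ttot l x c = (if deg (snd c) \<le> 2 then x $ (fst c, Abs_mi (up l (Rep_mi (snd c)))) else 0)"

definition Delta :: "nat list \<Rightarrow> nat \<Rightarrow> 'n::finite vfield" where
  "Delta I l = foldr Svf I (Ttot l)"

definition dtot :: "nat \<Rightarrow> 'n::finite form1 \<Rightarrow> 'n form1" where
  "dtot j \<omega> = lie_form (Ttot j) \<omega>"

definition hilbert :: "('n::finite pt \<Rightarrow> real) \<Rightarrow> nat \<Rightarrow> 'n form1" where
  "hilbert L i x c = Sform i (dfun L) x c
     - (1/2) * (\<Sum>j\<in>{1,2}. dtot j (Sform j (Sform i (dfun L))) x c)"

definition homogeneous_on :: "'n::finite pt set \<Rightarrow> ('n pt \<Rightarrow> real) \<Rightarrow> bool" where
  "homogeneous_on W L = (\<forall>x\<in>W.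
     (\<forall>i\<in>{1,2}. \<forall>j\<in>{1,2}. lie_fun (Delta [i] j) L x = (if i = j then L x else 0)) \<and>
     (\<forall>i\<in>{1,2}. \<forall>j\<in>{1,2}. \<forall>k\<in>{1,2}. lie_fun (Delta [i,k] j) L x = 0))"

definition regular :: "'n::finite pt \<Rightarrow> bool" where
  "regular x = (\<forall>c1 c2::real. (\<forall>\<alpha>. c1 * x $ (\<alpha>, Abs_mi (1,0)) + c2 * x $ (\<alpha>, Abs_mi (0,1)) = 0)
                   \<longrightarrow> c1 = 0 \<and> c2 = 0)"

text \<open>W is the preimage of an open subset of F^2 and L is (the pull-back of) a
  function on that subset: W and L depend only on coordinates of order \<le> 2.\<close>
definition second_order_on :: "'n::finite pt set \<Rightarrow> ('n pt \<Rightarrow> real) \<Rightarrow> bool" where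
  "second_order_on W L = (\<forall>x\<in>W. \<forall>y. (\<forall>c. deg (snd c) \<le> 2 \<longrightarrow> y $ c = x $ c)
       \<longrightarrow> y \<in> W \<and> L y = L x)"

end

theory Submission
  imports Defs
begin

(*
  S^j acting on 1-forms is the transpose of S^j acting on vector fields, so contracting a form
  with \<Delta>^I_l = S^I T_l amounts to applying S^I to the form and contracting with T_l.
  Since L is of second order, dL has no components du^\<beta>_K with |K| = 3; a direct computation
  then shows that \<theta>^m has no components with |K| \<ge> 2 and that its du^\<beta>_i-component is
  \<partial>L/\<partial>u^\<beta>_{mi}.  Hence S^{ij} \<theta>^m = 0, which kills i^{ij}_l \<theta>^m and i^{ijk}_l \<theta>^m, while
  i^i_l \<theta>^m = \<Sum>_\<beta> u^\<beta>_l \<partial>L/\<partial>u^\<beta>_{im} = d^{im}_l L / 2 vanishes by homogeneity.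
*)

definition mi_empty :: mi where
  "mi_empty = Abs_mi (0, 0)"

definition mi_insert :: "nat \<Rightarrow> mi \<Rightarrow> mi" where
  "mi_insert j K = Abs_mi (up j (Rep_mi K))"

definition mi_remove :: "nat \<Rightarrow> mi \<Rightarrow> mi" where
  "mi_remove j K = Abs_mi (down j (Rep_mi K))"

lemma deg_le_3: "deg K \<le> 3"
  using Rep_mi[of K] by (auto simp: deg_def)

lemma Rep_mi_empty: "Rep_mi mi_empty = (0, 0)"
  by (simp add: mi_empty_def Abs_mi_inverse)

lemma deg_mi_empty [simp]: "deg mi_empty = 0"
  by (simp add: deg_def Rep_mi_empty)

lemma deg_eq_0_iff: "deg K = 0 \<longleftrightarrow> K = mi_empty"
  by (metis Rep_mi_inverse add_is_0 deg_def deg_mi_empty prod.collapse Rep_mi_empty)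

lemma Rep_mi_insert: "deg K \<le> 2 \<Longrightarrow> Rep_mi (mi_insert j K) = up j (Rep_mi K)"
  unfolding mi_insert_def by (rule Abs_mi_inverse) (auto simp: up_def deg_def)

lemma Rep_mi_remove: "Rep_mi (mi_remove j K) = down j (Rep_mi K)"
  unfolding mi_remove_def using Rep_mi[of K] by (intro Abs_mi_inverse) (auto simp: down_def)

lemma deg_mi_insert: "deg K \<le> 2 \<Longrightarrow> deg (mi_insert j K) = Suc (deg K)"
  by (simp add: deg_def Rep_mi_insert) (simp add: up_def)

lemma deg_mi_remove: "contains j (Rep_mi K) \<Longrightarrow> Suc (deg (mi_remove j K)) = deg K"
  by (auto simp: deg_def Rep_mi_remove down_def contains_def)

lemma contains_mi_insert: "deg K \<le> 2 \<Longrightarrow> contains j (Rep_mi (mi_insert j K))"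
  by (simp add: Rep_mi_insert up_def contains_def)

lemma mi_remove_insert: "deg K \<le> 2 \<Longrightarrow> mi_remove j (mi_insert j K) = K"
  by (simp add: mi_remove_def Rep_mi_insert Rep_mi_inverse up_def down_def)

lemma mi_insert_remove:
  assumes "contains j (Rep_mi K)"
  shows "mi_insert j (mi_remove j K) = K"
proof -
  have "up j (down j (Rep_mi K)) = Rep_mi K"
    using assms by (cases "Rep_mi K") (auto simp: up_def down_def contains_def)
  then show ?thesis
    by (simp add: mi_insert_def Rep_mi_remove Rep_mi_inverse)
qed

lemma mi_insert_commute:
  assumes "deg K \<le> 1"
  shows "mi_insert i (mi_insert j K) = mi_insert j (mi_insert i K)"
proof -
  have "deg (mi_insert i K) \<le> 2" "deg (mi_insert j K) \<le> 2"
    using assms by (simp_all add: deg_mi_insert)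
  then show ?thesis
    using assms unfolding mi_insert_def[of _ "mi_insert _ K"]
    by (simp add: Rep_mi_insert) (simp add: up_def)
qed

lemma mi_insert_empty_eq_iff:
  "i \<in> {1,2} \<Longrightarrow> j \<in> {1,2} \<Longrightarrow> mi_insert i mi_empty = mi_insert j mi_empty \<longleftrightarrow> i = j"
  by (auto dest!: arg_cong[where f = Rep_mi] simp: Rep_mi_insert Rep_mi_empty up_def)

lemma Sform_apply:
  "Sform j \<omega> x (\<beta>, K) =
    (if deg K \<le> 2 then real (Suc (deg K)) * \<omega> x (\<beta>, mi_insert j K) else 0)"
  by (simp add: Sform_def mi_insert_def)

lemma Svf_apply:
  "Svf j X x (\<beta>, K) =
    (if contains j (Rep_mi K) then real (deg K) * X x (\<beta>, mi_remove j K) else 0)"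
  by (simp add: Svf_def mi_remove_def)

lemma Ttot_apply: "Ttot l x (\<beta>, K) = (if deg K \<le> 2 then x $ (\<beta>, mi_insert l K) else 0)"
  by (simp add: Ttot_def mi_insert_def)

lemma Sform_Sform_mi_empty:
  "Sform j (Sform m \<omega>) y (\<alpha>, mi_empty) = 2 * \<omega> y (\<alpha>, mi_insert m (mi_insert j mi_empty))"
  by (simp add: Sform_apply deg_mi_insert)

lemma contract_Svf: "contract \<omega> (Svf j X) x = contract (Sform j \<omega>) X x"
proof -
  let ?T = "{c. contains j (Rep_mi (snd c))}" and ?S = "{c. deg (snd c) \<le> 2}"
  have deg_remove: "deg (mi_remove j K) \<le> 2" "1 + real (deg (mi_remove j K)) = real (deg K)"
    if "contains j (Rep_mi K)" for K
    using deg_mi_remove[OF that] deg_le_3[of K] by simp_all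
  have "contract \<omega> (Svf j X) x =
      (\<Sum>(\<beta>, K)\<in>?T. \<omega> x (\<beta>, K) * (real (deg K) * X x (\<beta>, mi_remove j K)))"
    unfolding contract_def sum.inter_filter[OF finite, of _ UNIV, simplified]
    by (intro sum.cong) (auto simp: Svf_apply)
  also have "\<dots> =
      (\<Sum>(\<beta>, K)\<in>?S. real (Suc (deg K)) * \<omega> x (\<beta>, mi_insert j K) * X x (\<beta>, K))"
    by (rule sum.reindex_bij_witness[where i = "\<lambda>(\<beta>, K). (\<beta>, mi_insert j K)"
          and j = "\<lambda>(\<beta>, K). (\<beta>, mi_remove j K)"])
       (auto simp: mi_remove_insert mi_insert_remove contains_mi_insert deg_mi_insert deg_remove)
  also have "\<dots> = contract (Sform j \<omega>) X x"
    unfolding contract_def sum.inter_filter[OF finite, of _ UNIV, simplified]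
    by (intro sum.cong) (auto simp: Sform_apply)
  finally show ?thesis .
qed

lemma contract_Delta: "contract \<omega> (Delta I l) x = contract (fold Sform I \<omega>) (Ttot l) x"
  by (induction I arbitrary: \<omega>) (simp_all add: Delta_def contract_Svf)

definition vanishes_from_order :: "nat \<Rightarrow> 'n::finite form1 \<Rightarrow> 'n pt \<Rightarrow> bool" where
  "vanishes_from_order d \<omega> x = (\<forall>\<beta> K. d \<le> deg K \<longrightarrow> \<omega> x (\<beta>, K) = 0)"

lemma vanishes_from_order_Sform:
  "vanishes_from_order d \<omega> x \<Longrightarrow> vanishes_from_order (d - 1) (Sform j \<omega>) x"
  unfolding vanishes_from_order_def by (simp add: Sform_apply deg_mi_insert)

lemma vanishes_from_order_fold_Sform:
  "vanishes_from_order d \<omega> x \<Longrightarrow> vanishes_from_order (d - length I) (fold Sform I \<omega>) x"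
proof (induction I arbitrary: d \<omega>)
  case (Cons j I)
  have "vanishes_from_order (d - 1 - length I) (fold Sform I (Sform j \<omega>)) x"
    by (rule Cons.IH[OF vanishes_from_order_Sform[OF Cons.prems]])
  then show ?case
    by (simp add: diff_diff_left)
qed simp

lemma contract_vanishes_from_order_0: "vanishes_from_order 0 \<omega> x \<Longrightarrow> contract \<omega> X x = 0"
  by (simp add: vanishes_from_order_def contract_def split_paired_all)

lemma sum_mi_empty:
  assumes "\<And>\<beta> K. K \<noteq> mi_empty \<Longrightarrow> f (\<beta>, K) = 0"
  shows "(\<Sum>c\<in>UNIV. f c) = (\<Sum>\<beta>\<in>UNIV. f (\<beta>, mi_empty))"
proof -
  have "(\<Sum>K\<in>UNIV. f (\<beta>, K)) = (\<Sum>K\<in>UNIV. if K = mi_empty then f (\<beta>, mi_empty) else 0)" for \<beta>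
    using assms by (intro sum.cong) auto
  moreover have "(\<Sum>c\<in>UNIV. f c) = (\<Sum>\<beta>\<in>UNIV. \<Sum>K\<in>UNIV. f (\<beta>, K))"
    by (subst sum.cartesian_product) simp
  ultimately show ?thesis
    by simp
qed

lemma contract_vanishes_from_order_1:
  "vanishes_from_order 1 \<omega> x \<Longrightarrow>
    contract \<omega> X x = (\<Sum>\<beta>\<in>UNIV. \<omega> x (\<beta>, mi_empty) * X x (\<beta>, mi_empty))"
  unfolding contract_def vanishes_from_order_def
  by (rule sum_mi_empty) (simp add: deg_eq_0_iff[symmetric])

lemma frechet_derivative_eq_0_along_constant_line:
  fixes f :: "'a::real_normed_vector \<Rightarrow> real"
  assumes "f differentiable (at y)" and const: "\<And>t. f (y + t *\<^sub>R v) = f y"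
  shows "frechet_derivative f (at y) v = 0"
proof -
  let ?D = "frechet_derivative f (at y)"
  have "(f has_derivative ?D) (at (y + 0 *\<^sub>R v))"
    using assms(1) by (simp add: frechet_derivative_works[symmetric])
  moreover have "((\<lambda>t. y + t *\<^sub>R v) has_derivative (\<lambda>t. t *\<^sub>R v)) (at 0)"
    by (auto intro!: derivative_eq_intros)
  ultimately have "((\<lambda>t. f (y + t *\<^sub>R v)) has_derivative (\<lambda>t. ?D (t *\<^sub>R v))) (at 0)"
    by (rule has_derivative_compose[rotated])
  moreover have "((\<lambda>t. f (y + t *\<^sub>R v)) has_derivative (\<lambda>t. 0)) (at 0)"
    unfolding const by (rule has_derivative_const)
  ultimately have "(\<lambda>t. ?D (t *\<^sub>R v)) = (\<lambda>t. 0)"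
    by (rule has_derivative_unique)
  then show ?thesis
    by (metis scaleR_one)
qed

lemma pd_has_derivative: "(f has_derivative f') (at x) \<Longrightarrow> pd c f x = f' (axis c 1)"
  unfolding pd_def by (metis frechet_derivative_at)

lemma pd_transform_within_open:
  assumes "open W" "x \<in> W" "\<And>y. y \<in> W \<Longrightarrow> f y = g y"
  shows "pd c f x = pd c g x"
proof -
  have "(f has_derivative f') (at x) \<longleftrightarrow> (g has_derivative f') (at x)" for f'
    using has_derivative_transform_within_open[OF _ assms(1,2)] assms(3) by metis
  then show ?thesis
    unfolding pd_def frechet_derivative_def by simp
qed

lemma lie_form_order_0:
  assumes W: "open W" "x \<in> W"
    and vanish: "\<And>y. y \<in> W \<Longrightarrow> vanishes_from_order 1 \<omega> y"
    and diff: "\<And>\<alpha>. (\<lambda>y. \<omega> y (\<alpha>, mi_empty)) differentiable (at x)"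
    and X: "\<And>y \<alpha>. X y (\<alpha>, mi_empty) = y $ (\<alpha>, J)"
    and K: "K \<noteq> mi_empty"
  shows "lie_form X \<omega> x (\<beta>, K) = (if K = J then \<omega> x (\<beta>, mi_empty) else 0)"
  \<comment> \<open>The derivatives of the coefficients of \<omega> cancel between d(i_X \<omega>) and i_X d\<omega>.\<close>
proof -
  define e :: "'a pt" where "e = axis (\<beta>, K) 1"
  define D where "D \<alpha> = frechet_derivative (\<lambda>y. \<omega> y (\<alpha>, mi_empty)) (at x)" for \<alpha>
  have hD: "((\<lambda>y. \<omega> y (\<alpha>, mi_empty)) has_derivative D \<alpha>) (at x)" for \<alpha>
    unfolding D_def using diff frechet_derivative_works by blast
  have vanish': "\<omega> y (\<alpha>, K') = 0" if "y \<in> W" "K' \<noteq> mi_empty" for y \<alpha> K'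
    using vanish[OF that(1)] that(2) by (simp add: vanishes_from_order_def deg_eq_0_iff[symmetric])
  have "contract \<omega> X y = (\<Sum>\<alpha>\<in>UNIV. \<omega> y (\<alpha>, mi_empty) * y $ (\<alpha>, J))"
    if "y \<in> W" for y
    using contract_vanishes_from_order_1[OF vanish[OF that]] by (simp add: X)
  then have "pd (\<beta>, K) (contract \<omega> X) x =
      pd (\<beta>, K) (\<lambda>y. \<Sum>\<alpha>\<in>UNIV. \<omega> y (\<alpha>, mi_empty) * y $ (\<alpha>, J)) x"
    by (rule pd_transform_within_open[OF W])
  also have "\<dots> = (\<Sum>\<alpha>\<in>UNIV. D \<alpha> e * x $ (\<alpha>, J) + \<omega> x (\<alpha>, mi_empty) * e $ (\<alpha>, J))"
    unfolding e_def
    by (rule pd_has_derivative)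
       (auto intro!: derivative_eq_intros hD bounded_linear.has_derivative[OF bounded_linear_vec_nth]
         simp: add.commute)
  finally have d_contract: "pd (\<beta>, K) (contract \<omega> X) x = \<dots>" .
  have "pd A (\<lambda>y. \<omega> y (\<beta>, K)) x = pd A (\<lambda>y. 0) x" for A
    using W vanish' K by (intro pd_transform_within_open) auto
  then have "contract2 X (dform \<omega>) x (\<beta>, K) =
      (\<Sum>A\<in>UNIV. - X x A * pd (\<beta>, K) (\<lambda>y. \<omega> y A) x)"
    unfolding contract2_def dform_def by (simp add: pd_has_derivative[OF has_derivative_const])
  also have "\<dots> =
      (\<Sum>\<alpha>\<in>UNIV. - X x (\<alpha>, mi_empty) * pd (\<beta>, K) (\<lambda>y. \<omega> y (\<alpha>, mi_empty)) x)"
  proof (rule sum_mi_empty)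
    fix \<alpha> K' assume "K' \<noteq> mi_empty"
    then have "pd (\<beta>, K) (\<lambda>y. \<omega> y (\<alpha>, K')) x = pd (\<beta>, K) (\<lambda>y. 0) x"
      using W vanish' by (intro pd_transform_within_open) auto
    then show "- X x (\<alpha>, K') * pd (\<beta>, K) (\<lambda>y. \<omega> y (\<alpha>, K')) x = 0"
      by (simp add: pd_has_derivative[OF has_derivative_const])
  qed
  also have "\<dots> = (\<Sum>\<alpha>\<in>UNIV. - x $ (\<alpha>, J) * D \<alpha> e)"
    by (simp add: X pd_def D_def e_def)
  finally have "lie_form X \<omega> x (\<beta>, K) = (\<Sum>\<alpha>\<in>UNIV. \<omega> x (\<alpha>, mi_empty) * e $ (\<alpha>, J))"
    unfolding lie_form_def dfun_def d_contract by (simp add: algebra_simps sum.distrib sum_negf)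
  also have "\<dots> = (if K = J then \<omega> x (\<beta>, mi_empty) else 0)"
    by (simp add: e_def axis_def if_distrib cong: if_cong)
  finally show ?thesis .
qed

context
  fixes W :: "'n::finite pt set" and L :: "'n pt \<Rightarrow> real"
  assumes open_W: "open W" and second_order: "second_order_on W L" and smooth: "smooth_on W L"
begin

lemma differentiable_L: "y \<in> W \<Longrightarrow> L differentiable (at y)"
  using smooth[unfolded smooth_on_def, THEN spec, of 1] by simp

lemma differentiable_pd_L: "y \<in> W \<Longrightarrow> pd c L differentiable (at y)"
  using smooth[unfolded smooth_on_def, THEN spec, of 2]
  by (simp add: numeral_2_eq_2 pd_def[abs_def] axis_in_Basis_iff)

lemma dfun_vanishes_from_order_3: "y \<in> W \<Longrightarrow> vanishes_from_order 3 (dfun L) y"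
  unfolding vanishes_from_order_def dfun_def pd_def
proof (intro allI impI frechet_derivative_eq_0_along_constant_line differentiable_L)
  fix y \<beta> K t assume "y \<in> W" "3 \<le> deg K"
  then have "\<forall>c. deg (snd c) \<le> 2 \<longrightarrow> (y + t *\<^sub>R axis (\<beta>, K) 1) $ c = y $ c"
    by (auto simp: axis_def)
  with \<open>y \<in> W\<close> show "L (y + t *\<^sub>R axis (\<beta>, K) 1) = L y"
    using second_order unfolding second_order_on_def by blast
qed

lemma dtot_Sform_Sform_dfun:
  assumes "x \<in> W" "K \<noteq> mi_empty"
  shows "dtot j (Sform j (Sform m (dfun L))) x (\<beta>, K) =
    (if K = mi_insert j mi_empty then 2 * pd (\<beta>, mi_insert m (mi_insert j mi_empty)) L x else 0)"
  unfolding dtot_def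
proof (subst lie_form_order_0[OF open_W assms(1) _ _ _ assms(2)])
  show "vanishes_from_order 1 (Sform j (Sform m (dfun L))) y" if "y \<in> W" for y
    using vanishes_from_order_fold_Sform[OF dfun_vanishes_from_order_3[OF that], of "[m, j]"]
    by simp
qed (auto simp: Sform_Sform_mi_empty dfun_def Ttot_apply differentiable_pd_L assms(1))

lemma hilbert_vanishes_from_order_2:
  assumes "x \<in> W"
  shows "vanishes_from_order 2 (hilbert L m) x"
proof -
  have "vanishes_from_order 2 (Sform m (dfun L)) x"
    using vanishes_from_order_Sform[OF dfun_vanishes_from_order_3[OF assms]] by simp
  moreover have "K \<noteq> mi_insert j mi_empty" if "2 \<le> deg K" for j K
    using that by (auto simp: deg_mi_insert)
  ultimately show ?thesis
    using assms unfolding vanishes_from_order_def hilbert_def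
    by (auto simp: dtot_Sform_Sform_dfun deg_eq_0_iff[symmetric])
qed

lemma hilbert_order_1:
  assumes "x \<in> W" "i \<in> {1,2}"
  shows "hilbert L m x (\<beta>, mi_insert i mi_empty) =
    pd (\<beta>, mi_insert m (mi_insert i mi_empty)) L x"
proof -
  have "mi_insert i mi_empty \<noteq> mi_empty"
    by (simp add: deg_eq_0_iff[symmetric] deg_mi_insert)
  then have "(\<Sum>j\<in>{1,2}. dtot j (Sform j (Sform m (dfun L))) x (\<beta>, mi_insert i mi_empty)) =
      (\<Sum>j\<in>{1,2}. if j = i then 2 * pd (\<beta>, mi_insert m (mi_insert i mi_empty)) L x else 0)"
    using assms by (intro sum.cong) (auto simp: dtot_Sform_Sform_dfun mi_insert_empty_eq_iff)
  then show ?thesis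
    using assms by (simp add: hilbert_def Sform_apply deg_mi_insert dfun_def)
qed

lemma contract_hilbert_Delta_single:
  assumes "x \<in> W" "i \<in> {1,2}"
  shows "contract (hilbert L m) (Delta [i] l) x = lie_fun (Delta [i, m] l) L x / 2"
proof -
  have "contract (hilbert L m) (Delta [i] l) x = contract (Sform i (hilbert L m)) (Ttot l) x"
    by (simp add: contract_Delta)
  also have "\<dots> =
      (\<Sum>\<beta>\<in>UNIV. pd (\<beta>, mi_insert m (mi_insert i mi_empty)) L x * x $ (\<beta>, mi_insert l mi_empty))"
    using vanishes_from_order_Sform[OF hilbert_vanishes_from_order_2[OF assms(1)]]
    by (simp add: contract_vanishes_from_order_1 Sform_apply Ttot_apply hilbert_order_1[OF assms])
  also have "\<dots> = contract (Sform m (Sform i (dfun L))) (Ttot l) x / 2"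
    using vanishes_from_order_fold_Sform[OF dfun_vanishes_from_order_3[OF assms(1)], of "[i, m]"]
    by (simp add: contract_vanishes_from_order_1 Sform_Sform_mi_empty Ttot_apply dfun_def
        mi_insert_commute sum_divide_distrib)
  also have "\<dots> = lie_fun (Delta [i, m] l) L x / 2"
    by (simp add: lie_fun_def contract_Delta)
  finally show ?thesis .
qed

lemma contract_hilbert_Delta_long:
  assumes "x \<in> W" "2 \<le> length I"
  shows "contract (hilbert L m) (Delta I l) x = 0"
  using vanishes_from_order_fold_Sform[OF hilbert_vanishes_from_order_2[OF assms(1)], of I] assms(2)
  by (simp add: contract_Delta contract_vanishes_from_order_0)

end

theorem lemma2:
  fixes W :: "'n::finite pt set" and L :: "'n pt \<Rightarrow> real"
  assumes "open W"
    and "\<forall>x\<in>W. regular x"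
    and "second_order_on W L"
    and "smooth_on W L"
    and "homogeneous_on W L"
  shows "\<forall>x\<in>W. \<forall>i\<in>{1,2}. \<forall>j\<in>{1,2}. \<forall>k\<in>{1,2}. \<forall>l\<in>{1,2}. \<forall>m\<in>{1,2}.
           contract (hilbert L m) (Delta [i] l) x = 0 \<and>
           contract (hilbert L m) (Delta [i,j] l) x = 0 \<and>
           contract (hilbert L m) (Delta [i,j,k] l) x = 0"
proof (intro ballI conjI)
  fix x and i j k l m :: nat
  assume x: "x \<in> W" and indices: "i \<in> {1,2}" "j \<in> {1,2}" "k \<in> {1,2}" "l \<in> {1,2}" "m \<in> {1,2}"
  have "lie_fun (Delta [i, m] l) L x = 0"
    using assms(5) x indices unfolding homogeneous_on_def by blast
  then show "contract (hilbert L m) (Delta [i] l) x = 0"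
    by (simp add: contract_hilbert_Delta_single[OF assms(1,3,4) x \<open>i \<in> {1,2}\<close>])
  show "contract (hilbert L m) (Delta [i,j] l) x = 0" "contract (hilbert L m) (Delta [i,j,k] l) x = 0"
    by (simp_all add: contract_hilbert_Delta_long[OF assms(1,3,4) x])
qed

end
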